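(* Let $f:X_1\to X_2$ be an L-morphism between L-spaces. (1) If $f$ is proper and $X_1$ is an algebraic L-space, then $f$ is coherent. (2) If $f$ is coherent and $X_2$ is an algebraic L-space, then $f$ is proper. (3) If $X_1$ and $X_2$ are algebraic L-spaces, then $f$ is coherent if and only if $f$ is proper.
   Context: A Priestley space is a Stone space $X$ with a partial order such that clopen upsets separate points. An L-space is a Priestley space in which the downset of each clopen set is clopen and the closure of each open upset is open. ${\sf ClopUp}(X)$ is the set of clopen upsets; $\mathrm{cl}$ denotes closure. An L-morphism is a continuous order-preserving map $f:X\to X'$ between L-spaces with $f^{-1}(\mathrm{cl}\,U)=\mathrm{cl}\,f^{-1}(U)$ for every open upset $U$ of $X'$. The spatial part of $X$ is $Y=\{y\in X\mid{\downarrow}y\text{ clopen}\}$. A Scott upset is a closed upset $F$ with $\min F\subseteq Y$; ${\sf ClopSUp}(X)$ is the set of clopen Scott upsets. For $U,V\in{\sf ClopUp}(X)$, $V\ll U$ means that for every open upset $W$, $U\subseteq\mathrm{cl}\,W$ implies $V\subseteq W$; $\ker U=\bigcup\{V\in{\sf ClopUp}(X)\mid V\ll U\}$; $\mathrm{core}\,U=\bigcup\{V\in{\sf ClopSUp}(X)\mid V\subseteq U\}$. $X$ is an algebraic L-space if $\mathrm{core}\,U$ is dense in $U$ for each $U\in{\sf ClopUp}(X)$. An L-morphism $f:X_1\to X_2$ is proper if $f^{-1}(\ker U)\subseteq\ker f^{-1}(U)$ for all $U\in{\sf ClopUp}(X_2)$, and coherent if $f^{-1}(\mathrm{core}\,U)\subseteq\mathrm{core}\,f^{-1}(U)$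 for all $U\in{\sf ClopUp}(X_2)$. *)

theory Defs
  imports "HOL-Analysis.Analysis"
begin

text \<open>An ordered topological space is given by a topology T (carrier = topspace T)
  together with a relation le, regarded only on the carrier.\<close>

definition clopen_in :: "'a topology \<Rightarrow> 'a set \<Rightarrow> bool" where
  "clopen_in T U \<longleftrightarrow> openin T U \<and> closedin T U"

definition stone_space :: "'a topology \<Rightarrow> bool" where
  "stone_space T \<longleftrightarrow> compact_space T \<and> Hausdorff_space T \<and>
     (\<forall>U x. openin T U \<and> x \<in> U \<longrightarrow> (\<exists>C. clopen_in T C \<and> x \<in> C \<and> C \<subseteq> U))"

definition partial_order_carrier :: "'a set \<Rightarrow> ('a \<Rightarrow> 'a \<Rightarrow> bool) \<Rightarrow> bool" where
  "partial_order_carrier A le \<longleftrightarrow>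
     (\<forall>x\<in>A. le x x) \<and>
     (\<forall>x\<in>A. \<forall>y\<in>A. le x y \<and> le y x \<longrightarrow> x = y) \<and>
     (\<forall>x\<in>A. \<forall>y\<in>A. \<forall>z\<in>A. le x y \<and> le y z \<longrightarrow> le x z)"

definition upset_in :: "'a topology \<Rightarrow> ('a \<Rightarrow> 'a \<Rightarrow> bool) \<Rightarrow> 'a set \<Rightarrow> bool" where
  "upset_in T le U \<longleftrightarrow> U \<subseteq> topspace T \<and> (\<forall>x\<in>U. \<forall>y\<in>topspace T. le x y \<longrightarrow> y \<in> U)"

definition downset_of :: "'a topology \<Rightarrow> ('a \<Rightarrow> 'a \<Rightarrow> bool) \<Rightarrow> 'a set \<Rightarrow> 'a set" where
  "downset_of T le S = {y \<in> topspace T. \<exists>x\<in>S. le y x}"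

definition priestley_space :: "'a topology \<Rightarrow> ('a \<Rightarrow> 'a \<Rightarrow> bool) \<Rightarrow> bool" where
  "priestley_space T le \<longleftrightarrow> stone_space T \<and> partial_order_carrier (topspace T) le \<and>
     (\<forall>x\<in>topspace T. \<forall>y\<in>topspace T. \<not> le x y \<longrightarrow>
        (\<exists>U. clopen_in T U \<and> upset_in T le U \<and> x \<in> U \<and> y \<notin> U))"

definition L_space :: "'a topology \<Rightarrow> ('a \<Rightarrow> 'a \<Rightarrow> bool) \<Rightarrow> bool" where
  "L_space T le \<longleftrightarrow> priestley_space T le \<and>
     (\<forall>U. clopen_in T U \<longrightarrow> clopen_in T (downset_of T le U)) \<and>
     (\<forall>U. openin T U \<and> upset_in T le U \<longrightarrow> openin T (T closure_of U))"

definition ClopUp :: "'a topology \<Rightarrow> ('a \<Rightarrow> 'a \<Rightarrow> bool) \<Rightarrow> 'a set set" where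
  "ClopUp T le = {U. clopen_in T U \<and> upset_in T le U}"

definition preim :: "'a topology \<Rightarrow> ('a \<Rightarrow> 'b) \<Rightarrow> 'b set \<Rightarrow> 'a set" where
  "preim T f A = {x \<in> topspace T. f x \<in> A}"

definition L_morphism :: "'a topology \<Rightarrow> ('a \<Rightarrow> 'a \<Rightarrow> bool) \<Rightarrow>
    'b topology \<Rightarrow> ('b \<Rightarrow> 'b \<Rightarrow> bool) \<Rightarrow> ('a \<Rightarrow> 'b) \<Rightarrow> bool" where
  "L_morphism T1 le1 T2 le2 f \<longleftrightarrow> continuous_map T1 T2 f \<and>
     (\<forall>x\<in>topspace T1. \<forall>y\<in>topspace T1. le1 x y \<longrightarrow> le2 (f x) (f y)) \<and>
     (\<forall>U. openin T2 U \<and> upset_in T2 le2 U \<longrightarrow>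
        preim T1 f (T2 closure_of U) = T1 closure_of (preim T1 f U))"

definition spatial_part :: "'a topology \<Rightarrow> ('a \<Rightarrow> 'a \<Rightarrow> bool) \<Rightarrow> 'a set" where
  "spatial_part T le = {y \<in> topspace T. clopen_in T (downset_of T le {y})}"

definition min_elems :: "('a \<Rightarrow> 'a \<Rightarrow> bool) \<Rightarrow> 'a set \<Rightarrow> 'a set" where
  "min_elems le F = {x \<in> F. \<forall>y\<in>F. le y x \<longrightarrow> y = x}"

definition scott_upset :: "'a topology \<Rightarrow> ('a \<Rightarrow> 'a \<Rightarrow> bool) \<Rightarrow> 'a set \<Rightarrow> bool" where
  "scott_upset T le F \<longleftrightarrow> closedin T F \<and> upset_in T le F \<and>
     min_elems le F \<subseteq> spatial_part T le"

definition ClopSUp :: "'a topology \<Rightarrow> ('a \<Rightarrow> 'a \<Rightarrow> bool) \<Rightarrow> 'a set set" where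
  "ClopSUp T le = {U. clopen_in T U \<and> scott_upset T le U}"

definition way_below :: "'a topology \<Rightarrow> ('a \<Rightarrow> 'a \<Rightarrow> bool) \<Rightarrow> 'a set \<Rightarrow> 'a set \<Rightarrow> bool" where
  "way_below T le V U \<longleftrightarrow>
     (\<forall>W. openin T W \<and> upset_in T le W \<and> U \<subseteq> T closure_of W \<longrightarrow> V \<subseteq> W)"

definition ker_of :: "'a topology \<Rightarrow> ('a \<Rightarrow> 'a \<Rightarrow> bool) \<Rightarrow> 'a set \<Rightarrow> 'a set" where
  "ker_of T le U = \<Union>{V \<in> ClopUp T le. way_below T le V U}"

definition core_of :: "'a topology \<Rightarrow> ('a \<Rightarrow> 'a \<Rightarrow> bool) \<Rightarrow> 'a set \<Rightarrow> 'a set" where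
  "core_of T le U = \<Union>{V \<in> ClopSUp T le. V \<subseteq> U}"

text \<open>core U dense in U: U is contained in the closure of core U (core U \<subseteq> U always).\<close>
definition algebraic_L_space :: "'a topology \<Rightarrow> ('a \<Rightarrow> 'a \<Rightarrow> bool) \<Rightarrow> bool" where
  "algebraic_L_space T le \<longleftrightarrow> L_space T le \<and>
     (\<forall>U\<in>ClopUp T le. U \<subseteq> T closure_of (core_of T le U))"

definition proper_morphism :: "'a topology \<Rightarrow> ('a \<Rightarrow> 'a \<Rightarrow> bool) \<Rightarrow>
    'b topology \<Rightarrow> ('b \<Rightarrow> 'b \<Rightarrow> bool) \<Rightarrow> ('a \<Rightarrow> 'b) \<Rightarrow> bool" where
  "proper_morphism T1 le1 T2 le2 f \<longleftrightarrow>
     (\<forall>U\<in>ClopUp T2 le2. preim T1 f (ker_of T2 le2 U) \<subseteq> ker_of T1 le1 (preim T1 f U))"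

definition coherent_morphism :: "'a topology \<Rightarrow> ('a \<Rightarrow> 'a \<Rightarrow> bool) \<Rightarrow>
    'b topology \<Rightarrow> ('b \<Rightarrow> 'b \<Rightarrow> bool) \<Rightarrow> ('a \<Rightarrow> 'b) \<Rightarrow> bool" where
  "coherent_morphism T1 le1 T2 le2 f \<longleftrightarrow>
     (\<forall>U\<in>ClopUp T2 le2. preim T1 f (core_of T2 le2 U) \<subseteq> core_of T1 le1 (preim T1 f U))"

end

theory Submission
  imports Defs
begin

text \<open>In a Priestley space every clopen Scott upset V \<subseteq> U is way below U: each point of V lies
  above a minimal point m of V (Zorn's lemma, compactness bounding chains from below); the
  downset of m is open, so U \<subseteq> cl W makes it meet the upset W, whence m \<in> W and V \<subseteq> W.
  Hence core U \<subseteq> ker U. In an algebraic L-space core U is itself an open upset whose closure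
  contains U, so whatever is way below U lies in core U, i.e. ker U = core U. Properness and
  coherence of f then imply each other by sandwiching preimages between kernels and cores.\<close>

lemma compact_space_Inter_chain_nonempty:
  assumes "compact_space X" and "\<And>C. C \<in> \<U> \<Longrightarrow> closedin X C \<and> C \<noteq> {}"
    and "subset.chain UNIV \<U>"
  shows "\<Inter>\<U> \<noteq> {}"
proof -
  have "\<Inter>\<F> \<noteq> {}" if "finite \<F>" "\<F> \<subseteq> \<U>" for \<F>
  proof (cases "\<F> = {}")
    case False
    have "subset.chain UNIV \<F>"
      using assms(3) \<open>\<F> \<subseteq> \<U>\<close> by (simp add: subset_chain_def subset_iff)
    then have "\<Inter>\<F> \<in> \<F>"
      by (rule Inter_in_chain[OF \<open>finite \<F>\<close> False])
    then show ?thesis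
      using assms(2) \<open>\<F> \<subseteq> \<U>\<close> by blast
  qed simp
  then show ?thesis
    using assms(1) assms(2) unfolding compact_space_fip by (meson conjunct1)
qed

lemma priestley_space_closedin_principal_downset:
  assumes P: "priestley_space T le" and y: "y \<in> topspace T"
  shows "closedin T {z \<in> topspace T. le z y}"
proof -
  have "openin T (topspace T - {z \<in> topspace T. le z y})"
  proof (subst openin_subopen, intro ballI)
    fix z assume z: "z \<in> topspace T - {z \<in> topspace T. le z y}"
    then obtain U where U: "clopen_in T U" "upset_in T le U" "z \<in> U" "y \<notin> U"
      using P y unfolding priestley_space_def by blast
    have "U \<subseteq> topspace T - {z \<in> topspace T. le z y}"
      using U y unfolding upset_in_def by blast
    then show "\<exists>W. openin T W \<and> z \<in> W \<and> W \<subseteq> topspace T - {z \<in> topspace T. le z y}"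
      using U unfolding clopen_in_def by blast
  qed
  then show ?thesis
    unfolding closedin_def by blast
qed

lemma partial_order_carrierD:
  assumes "partial_order_carrier A le"
  shows "a \<in> A \<Longrightarrow> le a a"
    and "a \<in> A \<Longrightarrow> b \<in> A \<Longrightarrow> le a b \<Longrightarrow> le b a \<Longrightarrow> a = b"
    and "a \<in> A \<Longrightarrow> b \<in> A \<Longrightarrow> c \<in> A \<Longrightarrow> le a b \<Longrightarrow> le b c \<Longrightarrow> le a c"
  using assms unfolding partial_order_carrier_def by blast+

lemma closedin_ex_min_elem_below:
  assumes "compact_space T" and po: "partial_order_carrier (topspace T) le"
    and down_closed: "\<And>y. y \<in> topspace T \<Longrightarrow> closedin T {z \<in> topspace T. le z y}"
    and V: "closedin T V" and x: "x \<in> V"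
  shows "\<exists>m\<in>min_elems le V. le m x"
proof -
  have VT: "V \<subseteq> topspace T"
    using V closedin_subset by blast
  have refl: "le a a" if "a \<in> V" for a
    using partial_order_carrierD(1)[OF po] that VT by (meson subsetD)
  have antisym: "a = b" if "a \<in> V" "b \<in> V" "le a b" "le b a" for a b
    using partial_order_carrierD(2)[OF po] that VT by (meson subsetD)
  have trans: "le a c" if "a \<in> V" "b \<in> V" "c \<in> V" "le a b" "le b c" for a b c
    using partial_order_carrierD(3)[OF po] that VT by (meson subsetD)
  define A where "A = {z \<in> V. le z x}"
  have "partial_order_on A (relation_of (\<lambda>a b. le b a) A)"
  proof (rule partial_order_on_relation_ofI)
    show "le a a" if "a \<in> A" for a
      using refl that unfolding A_def by blast
    show "le c a" if "a \<in> A" "b \<in> A" "c \<in> A" "le b a" "le c b" for a b c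
      using trans[of c b a] that unfolding A_def by blast
    show "a = b" if "a \<in> A" "b \<in> A" "le b a" "le a b" for a b
      using antisym that unfolding A_def by blast
  qed
  moreover have "\<exists>u\<in>A. \<forall>a\<in>C. le u a"
    if C: "C \<in> Chains (relation_of (\<lambda>a b. le b a) A)" for C
  proof (cases "C = {}")
    case True
    then show ?thesis
      using x refl[OF x] unfolding A_def by blast
  next
    case False
    have CA: "C \<subseteq> A"
      using Chains_relation_of[OF C] .
    have comparable: "le a b \<or> le b a" if "a \<in> C" "b \<in> C" for a b
      using C that unfolding Chains_def relation_of_def by blast
    define \<U> where "\<U> = (\<lambda>y. {z \<in> V. le z y}) ` C"
    have "closedin T D \<and> D \<noteq> {}" if "D \<in> \<U>" for D
    proof -
      obtain y where y: "y \<in> C" "D = {z \<in> V. le z y}"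
        using \<open>D \<in> \<U>\<close> \<U>_def by blast
      have yV: "y \<in> V"
        using y CA A_def by blast
      have "D = V \<inter> {z \<in> topspace T. le z y}"
        using y VT by blast
      then have "closedin T D"
        using closedin_Int[OF V down_closed] yV VT by blast
      moreover have "y \<in> D"
        using y yV refl by blast
      ultimately show ?thesis
        by blast
    qed
    moreover have "subset.chain UNIV \<U>"
      unfolding subset_chain_def
    proof (intro conjI ballI)
      fix D E assume "D \<in> \<U>" "E \<in> \<U>"
      then obtain a b where ab: "a \<in> C" "b \<in> C" "D = {z \<in> V. le z a}" "E = {z \<in> V. le z b}"
        using \<U>_def by blast
      have "a \<in> V" "b \<in> V"
        using ab CA A_def by blast+
      then show "D \<subseteq> E \<or> E \<subseteq> D"
        using comparable[OF ab(1,2)] trans unfolding ab(3,4) by blast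
    qed simp
    ultimately obtain m where m: "m \<in> \<Inter>\<U>"
      using compact_space_Inter_chain_nonempty[OF \<open>compact_space T\<close>] by blast
    obtain y where y: "y \<in> C"
      using False by blast
    have "m \<in> V" "le m y" "\<forall>a\<in>C. le m a"
      using m y \<U>_def by blast+
    moreover have "le m x"
      using trans[of m y x] \<open>m \<in> V\<close> \<open>le m y\<close> y CA x unfolding A_def by blast
    ultimately show ?thesis
      unfolding A_def by blast
  qed
  ultimately obtain m where m: "m \<in> A" and minimal: "\<forall>a\<in>A. le a m \<longrightarrow> a = m"
    using predicate_Zorn[of A "\<lambda>a b. le b a"] by blast
  have "m \<in> min_elems le V"
    unfolding min_elems_def
  proof (intro CollectI conjI ballI impI)
    show "m \<in> V"
      using m A_def by blast
  next
    fix y assume "y \<in> V" "le y m"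
    then have "y \<in> A"
      using trans[of y m x] m x unfolding A_def by blast
    then show "y = m"
      using minimal \<open>le y m\<close> by blast
  qed
  then show ?thesis
    using m A_def by blast
qed

lemma preim_mono: "A \<subseteq> B \<Longrightarrow> preim T f A \<subseteq> preim T f B"
  unfolding preim_def by blast

lemma preim_in_ClopUp:
  assumes f: "continuous_map T1 T2 f"
    and mono: "\<forall>x\<in>topspace T1. \<forall>y\<in>topspace T1. le1 x y \<longrightarrow> le2 (f x) (f y)"
    and U: "U \<in> ClopUp T2 le2"
  shows "preim T1 f U \<in> ClopUp T1 le1"
proof -
  have U': "openin T2 U" "closedin T2 U" "upset_in T2 le2 U"
    using U unfolding ClopUp_def clopen_in_def by auto
  have "openin T1 (preim T1 f U)" "closedin T1 (preim T1 f U)"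
    unfolding preim_def
    using openin_continuous_map_preimage[OF f U'(1)] closedin_continuous_map_preimage[OF f U'(2)]
    by auto
  moreover have "upset_in T1 le1 (preim T1 f U)"
    unfolding upset_in_def preim_def
  proof (intro conjI ballI impI)
    fix x y assume x: "x \<in> {x \<in> topspace T1. f x \<in> U}" and y: "y \<in> topspace T1" and "le1 x y"
    then have "le2 (f x) (f y)"
      using mono by blast
    moreover have "f y \<in> topspace T2"
      using f y by (meson continuous_map_image_subset_topspace image_subset_iff)
    ultimately show "y \<in> {x \<in> topspace T1. f x \<in> U}"
      using U'(3) x y unfolding upset_in_def by blast
  qed auto
  ultimately show ?thesis
    unfolding ClopUp_def clopen_in_def by blast
qed

lemma L_morphism_preim_in_ClopUp:
  assumes "L_morphism T1 le1 T2 le2 f" and "U \<in> ClopUp T2 le2"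
  shows "preim T1 f U \<in> ClopUp T1 le1"
proof (rule preim_in_ClopUp[OF _ _ assms(2)])
  show "continuous_map T1 T2 f"
    and "\<forall>x\<in>topspace T1. \<forall>y\<in>topspace T1. le1 x y \<longrightarrow> le2 (f x) (f y)"
    using assms(1) unfolding L_morphism_def by blast+
qed

lemma scott_upset_way_below:
  assumes P: "priestley_space T le" and V: "scott_upset T le V" and "V \<subseteq> U"
  shows "way_below T le V U"
  unfolding way_below_def
proof (intro allI impI subsetI)
  fix W z assume W: "openin T W \<and> upset_in T le W \<and> U \<subseteq> T closure_of W" and z: "z \<in> V"
  have V_closed: "closedin T V"
    using V unfolding scott_upset_def by blast
  have compact: "compact_space T" and po: "partial_order_carrier (topspace T) le"
    using P unfolding priestley_space_def stone_space_def by blast+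
  obtain m where m: "m \<in> min_elems le V" "le m z"
    using closedin_ex_min_elem_below[OF compact po
        priestley_space_closedin_principal_downset[OF P] V_closed z] by blast
  have "m \<in> spatial_part T le"
    using m V unfolding scott_upset_def by blast
  then have mT: "m \<in> topspace T" and "openin T (downset_of T le {m})"
    unfolding spatial_part_def clopen_in_def by blast+
  moreover have "m \<in> downset_of T le {m}"
    using partial_order_carrierD(1)[OF po mT] mT
    unfolding downset_of_def by blast
  moreover have "m \<in> T closure_of W"
    using m \<open>V \<subseteq> U\<close> W unfolding min_elems_def by blast
  ultimately obtain w where "w \<in> W" "w \<in> downset_of T le {m}"
    unfolding in_closure_of by blast
  then have "m \<in> W"
    using W mT unfolding downset_of_def upset_in_def by blast
  moreover have "z \<in> topspace T"
    using z V_closed closedin_subset by blast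
  ultimately show "z \<in> W"
    using W m unfolding upset_in_def by blast
qed

lemma core_of_subset_ker_of:
  assumes "priestley_space T le"
  shows "core_of T le U \<subseteq> ker_of T le U"
proof
  fix x assume "x \<in> core_of T le U"
  then obtain V where V: "V \<in> ClopSUp T le" "V \<subseteq> U" "x \<in> V"
    unfolding core_of_def by blast
  then have "V \<in> ClopUp T le"
    unfolding ClopSUp_def ClopUp_def scott_upset_def by blast
  moreover have "way_below T le V U"
    using scott_upset_way_below[OF assms _ \<open>V \<subseteq> U\<close>] V(1) unfolding ClopSUp_def by blast
  ultimately show "x \<in> ker_of T le U"
    using V(3) unfolding ker_of_def by blast
qed

lemma openin_core_of: "openin T (core_of T le U)"
  unfolding core_of_def by (rule openin_Union) (auto simp: ClopSUp_def clopen_in_def)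

lemma upset_in_core_of: "upset_in T le (core_of T le U)"
  unfolding upset_in_def
proof (intro conjI ballI impI)
  show "core_of T le U \<subseteq> topspace T"
    by (rule openin_subset[OF openin_core_of])
next
  fix a b assume "a \<in> core_of T le U" "b \<in> topspace T" "le a b"
  moreover from \<open>a \<in> core_of T le U\<close> obtain V where V: "V \<in> ClopSUp T le" "V \<subseteq> U" "a \<in> V"
    unfolding core_of_def by blast
  moreover have "upset_in T le V"
    using V(1) unfolding ClopSUp_def scott_upset_def by blast
  ultimately have "b \<in> V"
    unfolding upset_in_def by blast
  then show "b \<in> core_of T le U"
    using V unfolding core_of_def by blast
qed

lemma ker_of_subset_core_of:
  assumes "algebraic_L_space T le" and "U \<in> ClopUp T le"
  shows "ker_of T le U \<subseteq> core_of T le U"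
proof -
  have "U \<subseteq> T closure_of (core_of T le U)"
    using assms unfolding algebraic_L_space_def by blast
  then have "V \<subseteq> core_of T le U" if "way_below T le V U" for V
    using that openin_core_of upset_in_core_of unfolding way_below_def by (meson conjI)
  then show ?thesis
    unfolding ker_of_def by blast
qed

lemma proper_imp_coherent_morphism:
  assumes "priestley_space T2 le2" and "algebraic_L_space T1 le1"
    and f: "L_morphism T1 le1 T2 le2 f" and "proper_morphism T1 le1 T2 le2 f"
  shows "coherent_morphism T1 le1 T2 le2 f"
  unfolding coherent_morphism_def
proof
  fix U assume U: "U \<in> ClopUp T2 le2"
  have "preim T1 f (core_of T2 le2 U) \<subseteq> preim T1 f (ker_of T2 le2 U)"
    by (rule preim_mono[OF core_of_subset_ker_of[OF assms(1)]])
  also have "\<dots> \<subseteq> ker_of T1 le1 (preim T1 f U)"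
    using assms(4) U unfolding proper_morphism_def by blast
  also have "\<dots> \<subseteq> core_of T1 le1 (preim T1 f U)"
    by (rule ker_of_subset_core_of[OF assms(2) L_morphism_preim_in_ClopUp[OF f U]])
  finally show "preim T1 f (core_of T2 le2 U) \<subseteq> core_of T1 le1 (preim T1 f U)" .
qed

lemma coherent_imp_proper_morphism:
  assumes "priestley_space T1 le1" and "algebraic_L_space T2 le2"
    and "coherent_morphism T1 le1 T2 le2 f"
  shows "proper_morphism T1 le1 T2 le2 f"
  unfolding proper_morphism_def
proof
  fix U assume U: "U \<in> ClopUp T2 le2"
  have "preim T1 f (ker_of T2 le2 U) \<subseteq> preim T1 f (core_of T2 le2 U)"
    by (rule preim_mono[OF ker_of_subset_core_of[OF assms(2) U]])
  also have "\<dots> \<subseteq> core_of T1 le1 (preim T1 f U)"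
    using assms(3) U unfolding coherent_morphism_def by blast
  also have "\<dots> \<subseteq> ker_of T1 le1 (preim T1 f U)"
    by (rule core_of_subset_ker_of[OF assms(1)])
  finally show "preim T1 f (ker_of T2 le2 U) \<subseteq> ker_of T1 le1 (preim T1 f U)" .
qed

theorem lemma4p7:
  fixes T1 :: "'a topology" and le1 :: "'a \<Rightarrow> 'a \<Rightarrow> bool"
    and T2 :: "'b topology" and le2 :: "'b \<Rightarrow> 'b \<Rightarrow> bool"
    and f :: "'a \<Rightarrow> 'b"
  assumes "L_space T1 le1" and "L_space T2 le2"
    and "L_morphism T1 le1 T2 le2 f"
  shows "(proper_morphism T1 le1 T2 le2 f \<and> algebraic_L_space T1 le1
            \<longrightarrow> coherent_morphism T1 le1 T2 le2 f)
       \<and> (coherent_morphism T1 le1 T2 le2 f \<and> algebraic_L_space T2 le2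
            \<longrightarrow> proper_morphism T1 le1 T2 le2 f)
       \<and> (algebraic_L_space T1 le1 \<and> algebraic_L_space T2 le2
            \<longrightarrow> (coherent_morphism T1 le1 T2 le2 f \<longleftrightarrow> proper_morphism T1 le1 T2 le2 f))"
proof -
  have "priestley_space T1 le1" "priestley_space T2 le2"
    using assms(1,2) unfolding L_space_def by blast+
  then show ?thesis
    using proper_imp_coherent_morphism[OF _ _ assms(3)] coherent_imp_proper_morphism by blast
qed

end
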